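(* For a finite word $\alpha=(a_0,\ldots,a_{L-1})$ of positive integers let $K(\alpha)=\sum_i a_i$, $C(\alpha)=\sum_{j=0}^{L-1}3^{L-1-j}2^{a_0+\cdots+a_{j-1}}$ and $D(\alpha)=2^{K(\alpha)}-3^{L}$, with the convention $C(\emptyset)=0$, $D(\emptyset)=2^0-3^0=0$ for the empty word. Let $\tau$ be a word of length $p\ge 1$, let $q\ge 1$, let $\eta$ be a (possibly empty) word of length $t\ge 0$, and let $\sigma=\tau^q\eta$ (concatenation of $q$ copies of $\tau$ followed by $\eta$), of length $\ell=qp+t$. Writing $K_p=K(\tau)$, $C_p=C(\tau)$, $D_p=D(\tau)$, $C_\ell=C(\sigma)$, $D=D(\sigma)$, $C_\eta=C(\eta)$, $D_\eta=D(\eta)$, one has $$C_\ell D_p-C_p D=2^{qK_p}\bigl(C_\eta D_p-C_p D_\eta\bigr).$$ *)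

theory Defs
  imports Main
begin

definition K :: "nat list \<Rightarrow> nat" where
  "K \<alpha> = sum_list \<alpha>"

definition C :: "nat list \<Rightarrow> int" where
  "C \<alpha> = (\<Sum>j<length \<alpha>. 3 ^ (length \<alpha> - 1 - j) * 2 ^ (sum_list (take j \<alpha>)))"

definition D :: "nat list \<Rightarrow> int" where
  "D \<alpha> = 2 ^ K \<alpha> - 3 ^ length \<alpha>"

end

theory Submission
  imports Defs
begin

text \<open>Reading a word letter by letter, C satisfies C(a b) = 3^|b| C(a) + 2^K(a) C(b), and
  D(a b) = 2^K(a) 2^K(b) - 3^|a| 3^|b|. Substituting both into the left-hand side for
  \<sigma> = \<tau> \<rho> makes the terms in 3^|\<rho>| cancel, leaving
  C(\<tau> \<rho>) D(\<tau>) - C(\<tau>) D(\<tau> \<rho>) = 2^K(\<tau>) (C(\<rho>) D(\<tau>) - C(\<tau>) D(\<rho>)); peeling off the q copies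
  of \<tau> one at a time gives the theorem.\<close>

lemma K_append: "K (a @ b) = K a + K b"
  by (simp add: K_def)

lemma C_Nil: "C [] = 0"
  by (simp add: C_def)

lemma C_Cons: "C (x # w) = 3 ^ length w + 2 ^ x * C w"
proof -
  have "C (x # w) = 3 ^ length w
      + (\<Sum>j<length w. 3 ^ (length w - 1 - j) * 2 ^ sum_list (take (Suc j) (x # w)))"
    unfolding C_def by (simp add: sum.lessThan_Suc_shift del: sum.lessThan_Suc)
  also have "\<dots> = 3 ^ length w + 2 ^ x * C w"
    by (simp add: C_def sum_distrib_left power_add algebra_simps)
  finally show ?thesis .
qed

lemma C_append: "C (a @ b) = 3 ^ length b * C a + 2 ^ K a * C b"
  by (induction a) (simp_all add: C_Nil C_Cons K_def power_add algebra_simps)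

lemma C_D_cross_append:
  "C (a @ b) * D a - C a * D (a @ b) = 2 ^ K a * (C b * D a - C a * D b)"
  unfolding C_append D_def K_append by (simp add: power_add algebra_simps)

lemma C_D_cross_replicate_append:
  "C (concat (replicate q a) @ b) * D a - C a * D (concat (replicate q a) @ b)
     = 2 ^ (q * K a) * (C b * D a - C a * D b)"
proof (induction q)
  case 0
  then show ?case by simp
next
  case (Suc q)
  have "C (concat (replicate (Suc q) a) @ b) * D a - C a * D (concat (replicate (Suc q) a) @ b)
      = 2 ^ K a * (C (concat (replicate q a) @ b) * D a - C a * D (concat (replicate q a) @ b))"
    using C_D_cross_append[of a "concat (replicate q a) @ b"] by simp
  also have "\<dots> = 2 ^ (Suc q * K a) * (C b * D a - C a * D b)"
    using Suc.IH by (simp add: power_add)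
  finally show ?case .
qed

theorem mainTheorem20:
  fixes \<tau> \<eta> :: "nat list" and q :: nat
  assumes "length \<tau> \<ge> 1" and "q \<ge> 1"
    and "\<forall>a\<in>set \<tau>. a > 0" and "\<forall>a\<in>set \<eta>. a > 0"
  shows "C (concat (replicate q \<tau>) @ \<eta>) * D \<tau> - C \<tau> * D (concat (replicate q \<tau>) @ \<eta>)
         = 2 ^ (q * K \<tau>) * (C \<eta> * D \<tau> - C \<tau> * D \<eta>)"
  by (rule C_D_cross_replicate_append)

end
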